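(* (1) The map $I \mapsto \underline{M}(I)$ is a bijection between tropical ideals $I \subset \mathbb{B}[x_1^{\pm1},\dots,x_n^{\pm1}]$ and finitary matroids on $\mathbb{Z}^n$ that are invariant under the action of $\mathbb{Z}^n$ by translation. (2) Consequently, for every $d\ge 1$, the map $I \mapsto \mathcal{H}(\underline{M}(I))$ is a bijection between paving tropical ideals of degree $d+1$ in $\mathbb{B}[x_1^{\pm1},\dots,x_n^{\pm1}]$ and $d$-partitions of $\mathbb{Z}^n$ that are invariant under the action of $\mathbb{Z}^n$.
   Context: The Boolean semiring is $\mathbb{B}=\{\infty,0\}$ with addition $\oplus=\min$ and multiplication $+$. For $f=\bigoplus_{\mathbf u\in\mathbb{Z}^n} c_{\mathbf u}\mathbf x^{\mathbf u}\in\mathbb{B}[x_1^{\pm1},\dots,x_n^{\pm1}]$, $\operatorname{supp}(f)=\{\mathbf u: c_{\mathbf u}\neq\infty\}$. An ideal $I$ is a tropical ideal if for all $f,g\in I$ and $\mathbf u\in\operatorname{supp}(f)\cap\operatorname{supp}(g)$ there is $h\in I$ with $\operatorname{supp}(f)\,\Delta\,\operatorname{supp}(g)\subset\operatorname{supp}(h)\subset(\operatorname{supp}(f)\cup\operatorname{supp}(g))\setminus\{\mathbf u\}$. The underlying matroid $\underline{M}(I)$ is the finitary matroid on $\mathbb{Z}^n$ in which a set is independent iff it contains the support of no polynomial of $I$ (its circuits are the minimal supports of polynomials in $I$). A finitary matroid on a set $E$: nonempty collection of independent sets closed under subsets, satisfying augmentation, with a set independent whenever all its finite subsets are. A tropical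 ideal is zero-dimensional of degree $r$ iff $\underline{M}(I)$ has finite rank $r$ (equivalent to the Hilbert-polynomial definition). A zero-dimensional tropical ideal $I$ is a paving tropical ideal if $\underline{M}(I)$ is a paving matroid, i.e. all circuits have size $\deg(I)$ or $\deg(I)+1$. A hyperplane of a finite-rank matroid $M$ is a maximal subset of rank $\operatorname{rank}(M)-1$; $\mathcal{H}(M)$ is the set of hyperplanes. A $d$-partition of a set $E$ ($|E|\ge d+1$) is a collection $\mathcal P$ of subsets (blocks) with $|\mathcal P|\ge2$, every block of size $\ge d$, and every $d$-subset of $E$ contained in exactly one block. $\mathbb{Z}^n$ acts on subsets by $\mathbf u+S=\{\mathbf u+\mathbf v:\mathbf v\in S\}$, on collections by $\mathbf u+\mathcal P=\{\mathbf u+S:S\in\mathcal P\}$, and similarly on matroids on $\mathbb{Z}^n$; invariance means fixed by every $\mathbf u\in\mathbb{Z}^n$. *)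

theory Defs
  imports "HOL-Analysis.Finite_Cartesian_Product"
begin

text \<open>Exponent lattice Z^n is modelled as int^'n (n = CARD('n) >= 1).
A polynomial of B[x_1^{+-1},...,x_n^{+-1}] has all coefficients in {infinity,0};
it is therefore identified with its support, a finite subset of Z^n.
The zero polynomial (all coefficients infinity) is the empty set.
Tropical addition (min) is union of supports; tropical multiplication
(coefficientwise +, then min) gives the Minkowski sum of supports.\<close>

type_synonym 'n lpoly = "(int ^ ('n::finite)) set"

definition bpoly :: "('n::finite) lpoly \<Rightarrow> bool" where
  "bpoly f \<longleftrightarrow> finite f"

definition supp :: "('n::finite) lpoly \<Rightarrow> (int ^ 'n) set" where
  "supp f = f"

definition poly_add :: "('n::finite) lpoly \<Rightarrow> 'n lpoly \<Rightarrow> 'n lpoly" where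
  "poly_add f g = f \<union> g"

definition poly_mult :: "('n::finite) lpoly \<Rightarrow> 'n lpoly \<Rightarrow> 'n lpoly" where
  "poly_mult f g = {u + v | u v. u \<in> f \<and> v \<in> g}"

definition semiring_ideal :: "('n::finite) lpoly set \<Rightarrow> bool" where
  "semiring_ideal I \<longleftrightarrow> I \<noteq> {} \<and> (\<forall>f\<in>I. bpoly f)
     \<and> (\<forall>f\<in>I. \<forall>g\<in>I. poly_add f g \<in> I)
     \<and> (\<forall>f\<in>I. \<forall>g. bpoly g \<longrightarrow> poly_mult g f \<in> I)"

definition tropical_ideal :: "('n::finite) lpoly set \<Rightarrow> bool" where
  "tropical_ideal I \<longleftrightarrow> semiring_ideal I \<and>
     (\<forall>f\<in>I. \<forall>g\<in>I. \<forall>u \<in> supp f \<inter> supp g. \<exists>h\<in>I.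
        (supp f - supp g) \<union> (supp g - supp f) \<subseteq> supp h \<and>
        supp h \<subseteq> (supp f \<union> supp g) - {u})"

text \<open>Matroids are represented by their family of independent sets.\<close>
definition finitary_matroid :: "'a set set \<Rightarrow> bool" where
  "finitary_matroid Ind \<longleftrightarrow> Ind \<noteq> {}
     \<and> (\<forall>X\<in>Ind. \<forall>Y. Y \<subseteq> X \<longrightarrow> Y \<in> Ind)
     \<and> (\<forall>X\<in>Ind. \<forall>Y\<in>Ind. finite X \<and> finite Y \<and> card X < card Y \<longrightarrow>
          (\<exists>y\<in>Y - X. insert y X \<in> Ind))
     \<and> (\<forall>X. (\<forall>F. F \<subseteq> X \<and> finite F \<longrightarrow> F \<in> Ind) \<longrightarrow> X \<in> Ind)"

definition underlying_matroid :: "('n::finite) lpoly set \<Rightarrow> (int ^ 'n) set set" where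
  "underlying_matroid I = {S. \<forall>f\<in>I. supp f \<noteq> {} \<longrightarrow> \<not> supp f \<subseteq> S}"

definition translate :: "int ^ ('n::finite) \<Rightarrow> (int ^ 'n) set \<Rightarrow> (int ^ 'n) set" where
  "translate u S = (\<lambda>v. u + v) ` S"

definition translation_invariant :: "(int ^ ('n::finite)) set set \<Rightarrow> bool" where
  "translation_invariant \<C> \<longleftrightarrow> (\<forall>u. translate u ` \<C> = \<C>)"

definition circuits :: "'a set set \<Rightarrow> 'a set set" where
  "circuits Ind = {C. C \<notin> Ind \<and> (\<forall>x\<in>C. C - {x} \<in> Ind)}"

definition has_rank :: "'a set set \<Rightarrow> nat \<Rightarrow> bool" where
  "has_rank Ind r \<longleftrightarrow> (\<forall>X\<in>Ind. finite X \<and> card X \<le> r) \<and> (\<exists>X\<in>Ind. finite X \<and> card X = r)"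

text \<open>Rank of a subset (meaningful for finite-rank matroids).\<close>
definition mrank :: "'a set set \<Rightarrow> 'a set \<Rightarrow> nat" where
  "mrank Ind X = Sup {card Y | Y. Y \<subseteq> X \<and> Y \<in> Ind}"

definition hyperplanes :: "'a set set \<Rightarrow> 'a set set" where
  "hyperplanes Ind = {H. mrank Ind H = mrank Ind UNIV - 1 \<and>
       (\<forall>H'. H \<subset> H' \<longrightarrow> mrank Ind H' \<noteq> mrank Ind UNIV - 1)}"

definition zero_dim_of_degree :: "('n::finite) lpoly set \<Rightarrow> nat \<Rightarrow> bool" where
  "zero_dim_of_degree I r \<longleftrightarrow> tropical_ideal I \<and> has_rank (underlying_matroid I) r"

definition paving_tropical_ideal_of_degree :: "('n::finite) lpoly set \<Rightarrow> nat \<Rightarrow> bool" where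
  "paving_tropical_ideal_of_degree I r \<longleftrightarrow> zero_dim_of_degree I r \<and>
     (\<forall>C \<in> circuits (underlying_matroid I). finite C \<and> (card C = r \<or> card C = r + 1))"

definition d_partition :: "nat \<Rightarrow> 'a set \<Rightarrow> 'a set set \<Rightarrow> bool" where
  "d_partition d E P \<longleftrightarrow> (infinite E \<or> card E \<ge> d + 1)
     \<and> (\<forall>B\<in>P. B \<subseteq> E)
     \<and> (\<exists>A\<in>P. \<exists>B\<in>P. A \<noteq> B)
     \<and> (\<forall>B\<in>P. infinite B \<or> card B \<ge> d)
     \<and> (\<forall>S. S \<subseteq> E \<and> finite S \<and> card S = d \<longrightarrow> (\<exists>!B. B \<in> P \<and> S \<subseteq> B))"

end

theory Submission
  imports Defs
begin

text \<open>
  A tropical ideal is determined by its underlying matroid, because every polynomial of the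
  ideal is the union of the minimal supports (the circuits) it contains. Conversely, for a
  translation-invariant finitary matroid the finite unions of circuits form a tropical ideal:
  translation invariance gives closure under multiplication by monomials and strong circuit
  elimination gives the elimination axiom. The underlying matroid of a tropical ideal is a
  matroid since the elimination axiom of the ideal is circuit elimination for its nonzero
  supports, which yields augmentation by the usual exchange argument.

  A paving matroid of rank \<open>d + 1\<close> is determined by its hyperplanes, which are the closures
  of the \<open>d\<close>-sets and form a \<open>d\<close>-partition; conversely a \<open>d\<close>-partition \<open>P\<close> gives the paving
  matroid whose independent sets are the sets of size at most \<open>d\<close> and the \<open>(d + 1)\<close>-sets
  contained in no block of \<open>P\<close>. Both constructions commute with translations.
\<close>

section \<open>Finitary matroids\<close>

lemma finitary_matroid_empty: "finitary_matroid M \<Longrightarrow> {} \<in> M"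
  unfolding finitary_matroid_def by blast

lemma finitary_matroid_subset: "finitary_matroid M \<Longrightarrow> X \<in> M \<Longrightarrow> Y \<subseteq> X \<Longrightarrow> Y \<in> M"
  unfolding finitary_matroid_def by blast

lemma finitary_matroid_augment:
  "finitary_matroid M \<Longrightarrow> X \<in> M \<Longrightarrow> Y \<in> M \<Longrightarrow> finite X \<Longrightarrow> finite Y \<Longrightarrow> card X < card Y
   \<Longrightarrow> \<exists>y\<in>Y - X. insert y X \<in> M"
  unfolding finitary_matroid_def by blast

lemma finitary_matroid_finitary:
  "finitary_matroid M \<Longrightarrow> (\<And>F. F \<subseteq> X \<Longrightarrow> finite F \<Longrightarrow> F \<in> M) \<Longrightarrow> X \<in> M"
  unfolding finitary_matroid_def by blast

lemma circuit_dependent: "C \<in> circuits M \<Longrightarrow> C \<notin> M"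
  unfolding circuits_def by blast

lemma dependent_contains_circuit:
  assumes "finite X" "X \<notin> M"
  shows "\<exists>C\<in>circuits M. C \<subseteq> X"
  using assms
proof (induction "card X" arbitrary: X rule: less_induct)
  case less
  show ?case
  proof (cases "\<forall>x\<in>X. X - {x} \<in> M")
    case True
    then show ?thesis using less.prems unfolding circuits_def by blast
  next
    case False
    then obtain x where x: "x \<in> X" "X - {x} \<notin> M" by blast
    with less.prems have "card (X - {x}) < card X" by (meson card_Diff1_less)
    with less.hyps[of "X - {x}"] less.prems x show ?thesis by auto
  qed
qed

lemma circuit_finite:
  assumes M: "finitary_matroid M" and C: "C \<in> circuits M"
  shows "finite C"
proof -
  obtain F where F: "F \<subseteq> C" "finite F" "F \<notin> M"
    using finitary_matroid_finitary[OF M, of C] circuit_dependent[OF C] by blast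
  have "F = C"
  proof (rule ccontr)
    assume "F \<noteq> C"
    then obtain x where "x \<in> C" "F \<subseteq> C - {x}" using F by blast
    then show False using C F finitary_matroid_subset[OF M] unfolding circuits_def by blast
  qed
  with F show ?thesis by simp
qed

lemma circuit_not_subset_indep:
  "finitary_matroid M \<Longrightarrow> C \<in> circuits M \<Longrightarrow> X \<in> M \<Longrightarrow> \<not> C \<subseteq> X"
  using finitary_matroid_subset circuit_dependent by blast

lemma
  assumes "{} \<in> M" and bounded: "\<And>Y. Y \<subseteq> X \<Longrightarrow> Y \<in> M \<Longrightarrow> card Y \<le> r"
  shows card_le_mrank: "Y \<subseteq> X \<Longrightarrow> Y \<in> M \<Longrightarrow> card Y \<le> mrank M X"
    and mrank_attained: "\<exists>Y. Y \<subseteq> X \<and> Y \<in> M \<and> card Y = mrank M X"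
proof -
  let ?K = "{card Y | Y. Y \<subseteq> X \<and> Y \<in> M}"
  have fin: "finite ?K" using bounded by (intro finite_subset[of ?K "{..r}"]) auto
  have ne: "?K \<noteq> {}" using assms(1) by blast
  have eq: "mrank M X = Max ?K" unfolding mrank_def using cSup_eq_Max[OF fin ne] .
  show "card Y \<le> mrank M X" if "Y \<subseteq> X" "Y \<in> M" using that eq fin by (auto intro: Max_ge)
  show "\<exists>Y. Y \<subseteq> X \<and> Y \<in> M \<and> card Y = mrank M X" using Max_in[OF fin ne] eq by auto
qed

lemma card_le_mrank_finite:
  "finitary_matroid M \<Longrightarrow> finite A \<Longrightarrow> J \<subseteq> A \<Longrightarrow> J \<in> M \<Longrightarrow> card J \<le> mrank M A"
  by (rule card_le_mrank[where r = "card A"]) (auto simp: finitary_matroid_empty card_mono)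

lemma mrank_attained_finite:
  "finitary_matroid M \<Longrightarrow> finite A \<Longrightarrow> \<exists>J. J \<subseteq> A \<and> J \<in> M \<and> card J = mrank M A"
  by (rule mrank_attained[where r = "card A"]) (auto simp: finitary_matroid_empty card_mono)

lemma mrank_extend:
  assumes M: "finitary_matroid M" and A: "finite A" and X: "X \<subseteq> A" "X \<in> M"
  shows "\<exists>J. X \<subseteq> J \<and> J \<subseteq> A \<and> J \<in> M \<and> card J = mrank M A"
proof -
  let ?F = "{J. X \<subseteq> J \<and> J \<subseteq> A \<and> J \<in> M}"
  have fin: "finite (card ` ?F)" using A by auto
  have "card ` ?F \<noteq> {}" using X by auto
  then obtain J where J: "J \<in> ?F" "card J = Max (card ` ?F)" using Max_in[OF fin] by auto
  have fJ: "finite J" using J A finite_subset by auto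
  have "\<not> card J < mrank M A"
  proof
    assume lt: "card J < mrank M A"
    obtain K where K: "K \<subseteq> A" "K \<in> M" "card K = mrank M A"
      using mrank_attained_finite[OF M A] by blast
    obtain y where y: "y \<in> K - J" "insert y J \<in> M"
      using finitary_matroid_augment[OF M, of J K] J K fJ finite_subset[OF K(1) A] lt by auto
    then have "insert y J \<in> ?F" using J K by auto
    then have "card (insert y J) \<le> card J" using J fin by simp
    then show False using y fJ by simp
  qed
  moreover have "card J \<le> mrank M A" using J card_le_mrank_finite[OF M A] by blast
  ultimately show ?thesis using J by (intro exI[of _ J]) auto
qed

lemma mrank_mono_finite:
  assumes M: "finitary_matroid M" and "finite B" "A \<subseteq> B"
  shows "mrank M A \<le> mrank M B"
proof -
  have "finite A" using assms(2,3) by (rule finite_subset[rotated])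
  then obtain J where J: "J \<subseteq> A" "J \<in> M" "card J = mrank M A"
    using mrank_attained_finite[OF M] by blast
  then have "card J \<le> mrank M B" using card_le_mrank_finite[OF M \<open>finite B\<close>] assms(3) by blast
  with J show ?thesis by simp
qed

lemma mrank_insert_circuit:
  assumes M: "finitary_matroid M" and A: "finite A" and e: "e \<notin> A"
    and C: "C \<in> circuits M" "C \<subseteq> insert e A" "e \<in> C"
  shows "mrank M (insert e A) \<le> mrank M A"
proof (rule ccontr)
  assume gt: "\<not> ?thesis"
  have "C - {e} \<in> M" using C unfolding circuits_def by auto
  then obtain J where J: "C - {e} \<subseteq> J" "J \<subseteq> A" "J \<in> M" "card J = mrank M A"
    using mrank_extend[OF M A, of "C - {e}"] C by auto
  obtain K where K: "K \<subseteq> insert e A" "K \<in> M" "card K = mrank M (insert e A)"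
    using mrank_attained_finite[OF M] A by blast
  have fJ: "finite J" using J(2) A by (rule finite_subset)
  have fK: "finite K" using K(1) A by (simp add: finite_subset)
  have "card J < card K" using J K gt by simp
  then obtain y where y: "y \<in> K - J" "insert y J \<in> M"
    using finitary_matroid_augment[OF M J(3) K(2) fJ fK] by blast
  show False
  proof (cases "y = e")
    case True
    then have "C \<subseteq> insert y J" using J by auto
    then show ?thesis using circuit_not_subset_indep[OF M C(1)] y by blast
  next
    case False
    then have "insert y J \<subseteq> A" using y K J by auto
    then have "card (insert y J) \<le> mrank M A" using card_le_mrank_finite[OF M A] y by blast
    then show ?thesis using y fJ J by simp
  qed
qed

lemma mrank_insert_no_circuit:
  assumes M: "finitary_matroid M" and A: "finite A" and x: "x \<notin> A"
    and no_circuit: "\<And>C. C \<in> circuits M \<Longrightarrow> C \<subseteq> insert x A \<Longrightarrow> x \<notin> C"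
  shows "mrank M A + 1 \<le> mrank M (insert x A)"
proof -
  obtain J where J: "J \<subseteq> A" "J \<in> M" "card J = mrank M A"
    using mrank_attained_finite[OF M A] by blast
  have fJ: "finite J" using J A finite_subset by auto
  have xJ: "x \<notin> J" using J x by blast
  have "insert x J \<in> M"
  proof (rule ccontr)
    assume "insert x J \<notin> M"
    then obtain C where C: "C \<in> circuits M" "C \<subseteq> insert x J"
      using dependent_contains_circuit fJ by blast
    have "x \<in> C" using C circuit_not_subset_indep[OF M C(1) J(2)] by blast
    with C J no_circuit show False by blast
  qed
  moreover have "card (insert x J) = mrank M A + 1" using J fJ xJ by simp
  ultimately show ?thesis using card_le_mrank_finite[OF M, of "insert x A" "insert x J"] A J by auto
qed

lemma strong_circuit_elimination:
  assumes M: "finitary_matroid M" and C: "C \<in> circuits M" and D: "D \<in> circuits M"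
    and u: "u \<in> C" "u \<in> D" and x: "x \<in> C" "x \<notin> D"
  shows "\<exists>C'\<in>circuits M. x \<in> C' \<and> C' \<subseteq> (C \<union> D) - {u}"
proof (rule ccontr)
  assume no: "\<not> ?thesis"
  define A where "A = (C \<union> D) - {u, x}"
  have fA: "finite A" unfolding A_def using circuit_finite[OF M] C D by auto
  have xA: "x \<notin> A" unfolding A_def by simp
  have "insert x A = (C \<union> D) - {u}" using u x unfolding A_def by blast
  then have "mrank M A + 1 \<le> mrank M (insert x A)"
    using no by (intro mrank_insert_no_circuit[OF M fA xA]) auto
  also have "\<dots> \<le> mrank M (insert x (insert u A))"
    using fA by (intro mrank_mono_finite[OF M]) auto
  also have "\<dots> \<le> mrank M (insert u A)"
    using u x fA by (intro mrank_insert_circuit[OF M _ _ C]) (auto simp: A_def)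
  also have "\<dots> \<le> mrank M A"
    using u x by (intro mrank_insert_circuit[OF M fA _ D]) (auto simp: A_def)
  finally show False by simp
qed

section \<open>Matroids given by a circuit elimination system\<close>

definition independent_sets :: "'a set set \<Rightarrow> 'a set set" where
  "independent_sets Cs = {X. \<forall>C\<in>Cs. \<not> C \<subseteq> X}"

definition circuit_elimination :: "'a set set \<Rightarrow> bool" where
  "circuit_elimination Cs \<longleftrightarrow>
     (\<forall>C1\<in>Cs. \<forall>C2\<in>Cs. \<forall>e\<in>C1 \<inter> C2. C1 \<noteq> C2 \<longrightarrow> (\<exists>C3\<in>Cs. C3 \<subseteq> (C1 \<union> C2) - {e}))"

lemma circuit_eliminationD:
  assumes "circuit_elimination Cs" "C1 \<in> Cs" "C2 \<in> Cs" "C1 \<noteq> C2" "e \<in> C1" "e \<in> C2"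
  obtains C3 where "C3 \<in> Cs" "C3 \<subseteq> (C1 \<union> C2) - {e}"
  using assms unfolding circuit_elimination_def by blast

lemma independent_setsD: "X \<in> independent_sets Cs \<Longrightarrow> C \<in> Cs \<Longrightarrow> \<not> C \<subseteq> X"
  unfolding independent_sets_def by blast

lemma circuit_in_insert_unique:
  assumes elim: "circuit_elimination Cs" and X: "X \<in> independent_sets Cs"
    and C1: "C1 \<in> Cs" "C1 \<subseteq> insert y X" and C2: "C2 \<in> Cs" "C2 \<subseteq> insert y X"
  shows "C1 = C2"
proof (rule ccontr)
  assume "C1 \<noteq> C2"
  moreover have "y \<in> C1" "y \<in> C2" using independent_setsD[OF X] C1 C2 by blast+
  ultimately obtain C3 where C3: "C3 \<in> Cs" "C3 \<subseteq> (C1 \<union> C2) - {y}"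
    using circuit_eliminationD[OF elim C1(1) C2(1)] by blast
  then have "C3 \<subseteq> X" using C1 C2 by blast
  with independent_setsD[OF X C3(1)] show False by blast
qed

lemma independent_sets_exchange:
  assumes elim: "circuit_elimination Cs" and X: "X \<in> independent_sets Cs"
    and C0: "C0 \<in> Cs" "C0 \<subseteq> insert y X" "e \<in> C0" "e \<noteq> y"
  shows "insert y (X - {e}) \<in> independent_sets Cs"
  unfolding independent_sets_def
proof (intro CollectI ballI notI)
  fix C assume C: "C \<in> Cs" "C \<subseteq> insert y (X - {e})"
  then have "C = C0" using circuit_in_insert_unique[OF elim X C(1) _ C0(1,2)] by blast
  with C C0 show False by blast
qed

lemma independent_sets_exchange_back:
  assumes elim: "circuit_elimination Cs"
    and C0: "C0 \<in> Cs" "C0 \<subseteq> insert y X" "y \<in> C0" "e \<in> C0" and yX: "y \<notin> X" "z \<noteq> y"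
    and indep: "insert z (insert y (X - {e})) \<in> independent_sets Cs"
  shows "insert z X \<in> independent_sets Cs"
  unfolding independent_sets_def
proof (intro CollectI ballI notI)
  fix C assume C: "C \<in> Cs" "C \<subseteq> insert z X"
  have "e \<in> C"
  proof (rule ccontr)
    assume "e \<notin> C"
    then have "C \<subseteq> insert z (insert y (X - {e}))" using C by blast
    with independent_setsD[OF indep C(1)] show False by blast
  qed
  moreover have "C0 \<noteq> C" using C C0 yX by blast
  ultimately obtain C3 where C3: "C3 \<in> Cs" "C3 \<subseteq> (C0 \<union> C) - {e}"
    using circuit_eliminationD[OF elim C0(1) C(1)] C0(4) by blast
  then have "C3 \<subseteq> insert z (insert y (X - {e}))" using C C0 by blast
  with independent_setsD[OF indep C3(1)] show False by blast
qed

lemma independent_sets_augment: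
  assumes elim: "circuit_elimination Cs" and Y: "Y \<in> independent_sets Cs" "finite Y"
  shows "X \<in> independent_sets Cs \<Longrightarrow> finite X \<Longrightarrow> card X < card Y
    \<Longrightarrow> \<exists>y\<in>Y - X. insert y X \<in> independent_sets Cs"
proof (induction "card (X - Y)" arbitrary: X rule: less_induct)
  case less
  let ?I = "independent_sets Cs"
  show ?case
  proof (rule ccontr)
    assume no: "\<not> ?thesis"
    have "\<not> Y \<subseteq> X" using card_mono[OF less.prems(2)] less.prems(3) leD by blast
    then obtain y where y: "y \<in> Y" "y \<notin> X" by blast
    with no have "insert y X \<notin> ?I" by blast
    then obtain C0 where C0: "C0 \<in> Cs" "C0 \<subseteq> insert y X"
      unfolding independent_sets_def by blast
    have "y \<in> C0" using C0 independent_setsD[OF less.prems(1) C0(1)] by blast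
    obtain e where e: "e \<in> C0" "e \<notin> Y" using independent_setsD[OF Y(1) C0(1)] by blast
    with C0 y have eX: "e \<in> X" "e \<noteq> y" by auto
    define X' where "X' = insert y (X - {e})"
    have X': "X' \<in> ?I" unfolding X'_def
      using independent_sets_exchange[OF elim less.prems(1) C0 e(1) eX(2)] .
    have fX': "finite X'" unfolding X'_def using less.prems(2) by simp
    have "card X' = card X"
      unfolding X'_def using less.prems(2) eX y by (simp add: card_Suc_Diff1 del: card_Diff_insert)
    then have card_X': "card X' < card Y" using less.prems(3) by simp
    have "X' - Y = (X - Y) - {e}" unfolding X'_def using y by blast
    then have "card (X' - Y) < card (X - Y)"
      using e eX less.prems(2) by (metis DiffI card_Diff1_less finite_Diff)
    then obtain z where z: "z \<in> Y - X'" "insert z X' \<in> ?I"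
      using less.hyps X' fX' card_X' by blast
    then have "z \<notin> X" "z \<noteq> y" using e unfolding X'_def by auto
    moreover have "insert z X \<in> ?I"
      using independent_sets_exchange_back[OF elim C0 \<open>y \<in> C0\<close> e(1) y(2) \<open>z \<noteq> y\<close>] z(2)
      unfolding X'_def .
    ultimately show False using no z(1) by blast
  qed
qed

lemma finitary_matroid_independent_sets:
  assumes "{} \<notin> Cs" and fin: "\<And>C. C \<in> Cs \<Longrightarrow> finite C" and elim: "circuit_elimination Cs"
  shows "finitary_matroid (independent_sets Cs)"
  unfolding finitary_matroid_def
proof (intro conjI ballI allI impI)
  have "{} \<in> independent_sets Cs" using assms(1) unfolding independent_sets_def by auto
  then show "independent_sets Cs \<noteq> {}" by blast
next
  fix X Y assume "X \<in> independent_sets Cs" "Y \<subseteq> X"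
  then show "Y \<in> independent_sets Cs" unfolding independent_sets_def by blast
next
  fix X Y assume "X \<in> independent_sets Cs" "Y \<in> independent_sets Cs"
    "finite X \<and> finite Y \<and> card X < card Y"
  then show "\<exists>y\<in>Y - X. insert y X \<in> independent_sets Cs"
    using independent_sets_augment[OF elim, of Y X] by blast
next
  fix X assume "\<forall>F. F \<subseteq> X \<and> finite F \<longrightarrow> F \<in> independent_sets Cs"
  then show "X \<in> independent_sets Cs" using fin unfolding independent_sets_def by blast
qed

lemma circuits_independent_sets:
  "circuits (independent_sets Cs) = {C\<in>Cs. \<forall>D\<in>Cs. D \<subseteq> C \<longrightarrow> D = C}"
proof (intro equalityI subsetI)
  fix C assume C: "C \<in> circuits (independent_sets Cs)"
  then obtain D where D: "D \<in> Cs" "D \<subseteq> C"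
    unfolding circuits_def independent_sets_def by blast
  have minimal: "D' = C" if D': "D' \<in> Cs" "D' \<subseteq> C" for D'
  proof (rule ccontr)
    assume "D' \<noteq> C"
    then obtain x where "x \<in> C" "D' \<subseteq> C - {x}" using D' by blast
    with C D' show False unfolding circuits_def independent_sets_def by blast
  qed
  with D show "C \<in> {C\<in>Cs. \<forall>D\<in>Cs. D \<subseteq> C \<longrightarrow> D = C}" by auto
next
  fix C assume "C \<in> {C\<in>Cs. \<forall>D\<in>Cs. D \<subseteq> C \<longrightarrow> D = C}"
  then show "C \<in> circuits (independent_sets Cs)"
    unfolding circuits_def independent_sets_def by blast
qed

section \<open>Translations\<close>

lemma translate_translate: "translate u (translate v S) = translate (u + v) S"
  unfolding translate_def by (auto simp: image_image add.assoc)

lemma translate_zero: "translate 0 S = S"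
  unfolding translate_def by simp

lemma translate_neg_translate: "translate (- u) (translate u S) = S"
  by (simp add: translate_translate translate_zero)

lemma translate_translate_neg: "translate u (translate (- u) S) = S"
  by (simp add: translate_translate translate_zero)

lemma card_translate: "card (translate u S) = card S"
  unfolding translate_def by (simp add: card_image)

lemma finite_translate: "finite (translate u S) \<longleftrightarrow> finite S"
  unfolding translate_def by (simp add: finite_image_iff)

lemma translate_subset_iff: "translate u A \<subseteq> translate u B \<longleftrightarrow> A \<subseteq> B"
  unfolding translate_def by auto

lemma translate_eq_iff: "translate u A = translate u B \<longleftrightarrow> A = B"
  by (metis translate_neg_translate)

lemma translate_subset_iff_neg: "translate u A \<subseteq> B \<longleftrightarrow> A \<subseteq> translate (- u) B"
  by (metis translate_subset_iff translate_translate_neg)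

lemma translation_invariantI:
  assumes "\<And>u S. S \<in> \<C> \<Longrightarrow> translate u S \<in> \<C>"
  shows "translation_invariant \<C>"
  unfolding translation_invariant_def
proof (intro allI equalityI subsetI)
  fix u X
  show "X \<in> \<C>" if "X \<in> translate u ` \<C>" using that assms by blast
  show "X \<in> translate u ` \<C>" if "X \<in> \<C>"
    using assms[OF that, of "- u"] translate_translate_neg[of u X] by (metis image_eqI)
qed

lemma translation_invariant_iff:
  assumes "translation_invariant \<C>"
  shows "translate u S \<in> \<C> \<longleftrightarrow> S \<in> \<C>"
proof -
  have "translate u ` \<C> = \<C>" using assms unfolding translation_invariant_def by blast
  then show ?thesis by (metis image_iff translate_eq_iff)
qed

lemma translation_invariant_circuits:
  assumes M: "translation_invariant M"
  shows "translation_invariant (circuits M)"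
proof (rule translation_invariantI)
  fix u C assume C: "C \<in> circuits M"
  have "translate u C - {x} \<in> M" if "x \<in> translate u C" for x
  proof -
    obtain c where c: "c \<in> C" "x = u + c" using \<open>x \<in> translate u C\<close> unfolding translate_def by blast
    then have "translate u C - {x} = translate u (C - {c})" unfolding translate_def by auto
    with C c show ?thesis using translation_invariant_iff[OF M] unfolding circuits_def by simp
  qed
  with C show "translate u C \<in> circuits M"
    using translation_invariant_iff[OF M] unfolding circuits_def by auto
qed

section \<open>Tropical ideals and their underlying matroids\<close>

lemma tropical_ideal_finite: "tropical_ideal I \<Longrightarrow> f \<in> I \<Longrightarrow> finite f"
  by (simp add: tropical_ideal_def semiring_ideal_def bpoly_def)

lemma tropical_ideal_Un: "tropical_ideal I \<Longrightarrow> f \<in> I \<Longrightarrow> g \<in> I \<Longrightarrow> f \<union> g \<in> I"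
  by (simp add: tropical_ideal_def semiring_ideal_def poly_add_def)

lemma tropical_ideal_mult: "tropical_ideal I \<Longrightarrow> f \<in> I \<Longrightarrow> finite g \<Longrightarrow> poly_mult g f \<in> I"
  by (simp add: tropical_ideal_def semiring_ideal_def bpoly_def)

lemma tropical_ideal_elim:
  "tropical_ideal I \<Longrightarrow> f \<in> I \<Longrightarrow> g \<in> I \<Longrightarrow> u \<in> f \<Longrightarrow> u \<in> g \<Longrightarrow>
    \<exists>h\<in>I. (f - g) \<union> (g - f) \<subseteq> h \<and> h \<subseteq> (f \<union> g) - {u}"
  unfolding tropical_ideal_def supp_def by blast

lemma tropical_ideal_empty:
  assumes I: "tropical_ideal I"
  shows "{} \<in> I"
proof -
  obtain f where "f \<in> I" using I unfolding tropical_ideal_def semiring_ideal_def by blast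
  with tropical_ideal_mult[OF I] have "poly_mult {} f \<in> I" by blast
  then show ?thesis by (simp add: poly_mult_def)
qed

lemma tropical_ideal_Union:
  assumes I: "tropical_ideal I"
  shows "finite F \<Longrightarrow> F \<subseteq> I \<Longrightarrow> \<Union>F \<in> I"
  by (induction F rule: finite_induct)
    (auto simp: tropical_ideal_empty[OF I] tropical_ideal_Un[OF I])

lemma tropical_ideal_translate:
  assumes "tropical_ideal I" "f \<in> I"
  shows "translate u f \<in> I"
proof -
  have "poly_mult {u} f = translate u f" unfolding poly_mult_def translate_def by auto
  with tropical_ideal_mult[OF assms, of "{u}"] show ?thesis by simp
qed

lemma underlying_matroid_eq: "underlying_matroid I = independent_sets (I - {{}})"
  unfolding underlying_matroid_def independent_sets_def supp_def by blast

lemma tropical_ideal_circuit_elimination: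
  assumes I: "tropical_ideal I"
  shows "circuit_elimination (I - {{}})"
  unfolding circuit_elimination_def
proof (intro ballI impI)
  fix f g e assume f: "f \<in> I - {{}}" and g: "g \<in> I - {{}}" and e: "e \<in> f \<inter> g" and "f \<noteq> g"
  then obtain h where h: "h \<in> I" "(f - g) \<union> (g - f) \<subseteq> h" "h \<subseteq> (f \<union> g) - {e}"
    using tropical_ideal_elim[OF I] by blast
  moreover have "h \<noteq> {}" using h(2) \<open>f \<noteq> g\<close> by blast
  ultimately show "\<exists>h\<in>I - {{}}. h \<subseteq> (f \<union> g) - {e}" by blast
qed

lemma finitary_matroid_underlying_matroid:
  "tropical_ideal I \<Longrightarrow> finitary_matroid (underlying_matroid I)"
  unfolding underlying_matroid_eq
  by (rule finitary_matroid_independent_sets)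
    (auto simp: tropical_ideal_finite tropical_ideal_circuit_elimination)

lemma translation_invariant_underlying_matroid:
  assumes I: "tropical_ideal I"
  shows "translation_invariant (underlying_matroid I)"
proof (rule translation_invariantI)
  fix u S assume S: "S \<in> underlying_matroid I"
  show "translate u S \<in> underlying_matroid I"
    unfolding underlying_matroid_eq independent_sets_def
  proof (intro CollectI ballI notI)
    fix f assume f: "f \<in> I - {{}}" "f \<subseteq> translate u S"
    have "translate (- u) f \<in> I" using tropical_ideal_translate[OF I] f(1) by blast
    moreover have "translate (- u) f \<noteq> {}" using f(1) unfolding translate_def by blast
    ultimately have "translate (- u) f \<in> I - {{}}" by blast
    moreover have "translate (- u) f \<subseteq> S"
      using f(2) translate_subset_iff_neg[of "- u" f S] by simp
    ultimately show False using S unfolding underlying_matroid_eq independent_sets_def by blast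
  qed
qed

lemma circuits_underlying_matroid:
  "circuits (underlying_matroid I) = {C \<in> I - {{}}. \<forall>D \<in> I - {{}}. D \<subseteq> C \<longrightarrow> D = C}"
  unfolding underlying_matroid_eq circuits_independent_sets ..

text \<open>A proper nonzero subpolynomial \<open>h\<close> of \<open>f\<close> either contains \<open>u\<close>, or eliminating a point
  of \<open>h\<close> from \<open>f\<close> and \<open>h\<close> gives a smaller polynomial that still contains \<open>u\<close>.\<close>

lemma tropical_ideal_circuit_through:
  assumes I: "tropical_ideal I"
  shows "f \<in> I \<Longrightarrow> u \<in> f \<Longrightarrow> \<exists>C\<in>circuits (underlying_matroid I). u \<in> C \<and> C \<subseteq> f"
proof (induction "card f" arbitrary: f rule: less_induct)
  case less
  have ff: "finite f" using tropical_ideal_finite[OF I less.prems(1)] .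
  show ?case
  proof (cases "f \<in> circuits (underlying_matroid I)")
    case True
    then show ?thesis using less.prems by blast
  next
    case False
    then obtain h where h: "h \<in> I" "h \<noteq> {}" "h \<subset> f"
      using less.prems unfolding circuits_underlying_matroid by blast
    have card_h: "card h < card f" using h(3) ff by (simp add: psubset_card_mono)
    show ?thesis
    proof (cases "u \<in> h")
      case True
      then show ?thesis using less.hyps[OF card_h h(1)] h(3) by blast
    next
      case False
      obtain w where w: "w \<in> h" using h(2) by blast
      then obtain k where k: "k \<in> I" "(f - h) \<union> (h - f) \<subseteq> k" "k \<subseteq> (f \<union> h) - {w}"
        using tropical_ideal_elim[OF I less.prems(1) h(1)] h(3) by blast
      have "u \<in> k" using k(2) False less.prems(2) by blast
      moreover have "k \<subset> f" using k(3) h(3) w by blast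
      then have "card k < card f" using ff by (simp add: psubset_card_mono)
      ultimately show ?thesis using less.hyps[OF _ k(1)] \<open>k \<subset> f\<close> by blast
    qed
  qed
qed

text \<open>The tropical ideal attached to a matroid (as a set of supports).\<close>

definition finite_cyclic_sets :: "'a set set \<Rightarrow> 'a set set" where
  "finite_cyclic_sets M = {f. finite f \<and> (\<forall>x\<in>f. \<exists>C\<in>circuits M. x \<in> C \<and> C \<subseteq> f)}"

lemma finite_cyclic_sets_underlying_matroid:
  assumes I: "tropical_ideal I"
  shows "finite_cyclic_sets (underlying_matroid I) = I"
proof (intro equalityI subsetI)
  fix f assume "f \<in> I"
  then show "f \<in> finite_cyclic_sets (underlying_matroid I)"
    using tropical_ideal_circuit_through[OF I] tropical_ideal_finite[OF I]
    unfolding finite_cyclic_sets_def by blast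
next
  fix f assume "f \<in> finite_cyclic_sets (underlying_matroid I)"
  then have ff: "finite f"
    and "\<forall>x\<in>f. \<exists>C. C \<in> circuits (underlying_matroid I) \<and> x \<in> C \<and> C \<subseteq> f"
    unfolding finite_cyclic_sets_def by auto
  then obtain c where c: "\<And>x. x \<in> f \<Longrightarrow> c x \<in> circuits (underlying_matroid I) \<and> x \<in> c x \<and> c x \<subseteq> f"
    by metis
  then have "f = \<Union>(c ` f)" by blast
  also have "\<dots> \<in> I"
    using ff c by (intro tropical_ideal_Union[OF I]) (auto simp: circuits_underlying_matroid)
  finally show "f \<in> I" .
qed

lemma underlying_matroid_finite_cyclic_sets:
  assumes M: "finitary_matroid M"
  shows "underlying_matroid (finite_cyclic_sets M) = M"
proof (intro equalityI subsetI)
  fix S assume S: "S \<in> underlying_matroid (finite_cyclic_sets M)"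
  show "S \<in> M"
  proof (rule finitary_matroid_finitary[OF M], rule ccontr)
    fix F assume F: "F \<subseteq> S" "finite F" "F \<notin> M"
    then obtain C where C: "C \<in> circuits M" "C \<subseteq> F" using dependent_contains_circuit by blast
    have "C \<in> finite_cyclic_sets M"
      using C circuit_finite[OF M C(1)] unfolding finite_cyclic_sets_def by blast
    moreover have "C \<noteq> {}" using circuit_dependent[OF C(1)] finitary_matroid_empty[OF M] by blast
    ultimately show False using S C F unfolding underlying_matroid_def supp_def by blast
  qed
next
  fix S assume S: "S \<in> M"
  show "S \<in> underlying_matroid (finite_cyclic_sets M)"
    unfolding underlying_matroid_def supp_def
  proof (intro CollectI ballI impI notI)
    fix f assume f: "f \<in> finite_cyclic_sets M" "f \<noteq> {}" "f \<subseteq> S"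
    then obtain C where "C \<in> circuits M" "C \<subseteq> f" unfolding finite_cyclic_sets_def by blast
    with f S show False using circuit_not_subset_indep[OF M] by blast
  qed
qed

lemma finite_cyclic_sets_Un:
  "f \<in> finite_cyclic_sets M \<Longrightarrow> g \<in> finite_cyclic_sets M \<Longrightarrow> f \<union> g \<in> finite_cyclic_sets M"
  unfolding finite_cyclic_sets_def by simp (meson Un_iff le_supI1 le_supI2)

lemma finite_cyclic_sets_poly_mult:
  assumes M: "translation_invariant M" and f: "f \<in> finite_cyclic_sets M" and g: "finite g"
  shows "poly_mult g f \<in> finite_cyclic_sets M"
proof -
  have "poly_mult g f = (\<lambda>(a, b). a + b) ` (g \<times> f)" unfolding poly_mult_def by auto
  then have "finite (poly_mult g f)" using f g unfolding finite_cyclic_sets_def by simp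
  moreover have "\<exists>C\<in>circuits M. w \<in> C \<and> C \<subseteq> poly_mult g f" if w: "w \<in> poly_mult g f" for w
  proof -
    obtain a v where av: "a \<in> g" "v \<in> f" "w = a + v" using w unfolding poly_mult_def by blast
    then obtain C where C: "C \<in> circuits M" "v \<in> C" "C \<subseteq> f"
      using f unfolding finite_cyclic_sets_def by blast
    have "translate a C \<in> circuits M"
      using C(1) translation_invariant_iff[OF translation_invariant_circuits[OF M]] by blast
    moreover have "w \<in> translate a C" "translate a C \<subseteq> poly_mult g f"
      using av C unfolding translate_def poly_mult_def by blast+
    ultimately show ?thesis by blast
  qed
  ultimately show ?thesis unfolding finite_cyclic_sets_def by blast
qed

lemma finite_cyclic_sets_elim:
  assumes M: "finitary_matroid M" and f: "f \<in> finite_cyclic_sets M"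
    and g: "g \<in> finite_cyclic_sets M"
    and u: "u \<in> f" "u \<in> g" and x: "x \<in> f" "x \<notin> g"
  shows "\<exists>C\<in>circuits M. x \<in> C \<and> C \<subseteq> (f \<union> g) - {u}"
proof -
  obtain C where C: "C \<in> circuits M" "x \<in> C" "C \<subseteq> f"
    using f x unfolding finite_cyclic_sets_def by blast
  show ?thesis
  proof (cases "u \<in> C")
    case False
    then show ?thesis using C by blast
  next
    case True
    obtain D where D: "D \<in> circuits M" "u \<in> D" "D \<subseteq> g"
      using g u unfolding finite_cyclic_sets_def by blast
    then obtain C' where "C' \<in> circuits M" "x \<in> C'" "C' \<subseteq> (C \<union> D) - {u}"
      using strong_circuit_elimination[OF M C(1) D(1) True D(2) C(2)] x by blast
    then show ?thesis using C D by blast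
  qed
qed

lemma tropical_ideal_finite_cyclic_sets:
  assumes M: "finitary_matroid M" and TI: "translation_invariant M"
  shows "tropical_ideal (finite_cyclic_sets M)"
  unfolding tropical_ideal_def semiring_ideal_def supp_def poly_add_def bpoly_def
proof (intro conjI ballI allI impI)
  have "{} \<in> finite_cyclic_sets M" unfolding finite_cyclic_sets_def by simp
  then show "finite_cyclic_sets M \<noteq> {}" by blast
  show "finite f" if "f \<in> finite_cyclic_sets M" for f using that unfolding finite_cyclic_sets_def
    by blast
  show "f \<union> g \<in> finite_cyclic_sets M"
    if "f \<in> finite_cyclic_sets M" "g \<in> finite_cyclic_sets M" for f g
    using that by (rule finite_cyclic_sets_Un)
  show "poly_mult g f \<in> finite_cyclic_sets M" if "f \<in> finite_cyclic_sets M" "finite g" for f g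
    using finite_cyclic_sets_poly_mult[OF TI that] .
next
  fix f g u assume f: "f \<in> finite_cyclic_sets M" and g: "g \<in> finite_cyclic_sets M"
    and u: "u \<in> f \<inter> g"
  define h where "h = \<Union>{C \<in> circuits M. C \<subseteq> (f \<union> g) - {u}}"
  have h_sub: "h \<subseteq> (f \<union> g) - {u}" unfolding h_def by blast
  have "finite ((f \<union> g) - {u})" using f g unfolding finite_cyclic_sets_def by simp
  with h_sub have "finite h" by (rule finite_subset)
  moreover have "\<exists>C\<in>circuits M. x \<in> C \<and> C \<subseteq> h" if "x \<in> h" for x
    using that unfolding h_def by blast
  ultimately have "h \<in> finite_cyclic_sets M" unfolding finite_cyclic_sets_def by blast
  moreover have "(f - g) \<union> (g - f) \<subseteq> h"
  proof
    fix x assume "x \<in> (f - g) \<union> (g - f)"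
    then have "\<exists>C\<in>circuits M. x \<in> C \<and> C \<subseteq> (f \<union> g) - {u}"
    proof
      assume "x \<in> f - g"
      then show ?thesis using finite_cyclic_sets_elim[OF M f g] u by blast
    next
      assume "x \<in> g - f"
      then show ?thesis using finite_cyclic_sets_elim[OF M g f] u by (simp add: Un_commute)
    qed
    then show "x \<in> h" unfolding h_def by blast
  qed
  ultimately show "\<exists>h\<in>finite_cyclic_sets M. (f - g) \<union> (g - f) \<subseteq> h \<and> h \<subseteq> (f \<union> g) - {u}"
    using h_sub by blast
qed

theorem tropical_ideals_bij_matroids:
  "bij_betw (underlying_matroid :: 'n::finite lpoly set \<Rightarrow> _)
     {I. tropical_ideal I} {M. finitary_matroid M \<and> translation_invariant M}"
proof (rule bij_betw_byWitness[where f' = finite_cyclic_sets])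
  show "\<forall>I\<in>{I. tropical_ideal I}. finite_cyclic_sets (underlying_matroid I) = I"
    using finite_cyclic_sets_underlying_matroid by blast
  show "\<forall>M\<in>{M. finitary_matroid M \<and> translation_invariant M}.
      underlying_matroid (finite_cyclic_sets M) = M"
    using underlying_matroid_finite_cyclic_sets by blast
  show "underlying_matroid ` {I. tropical_ideal I}
      \<subseteq> {M. finitary_matroid M \<and> translation_invariant M}"
    using finitary_matroid_underlying_matroid translation_invariant_underlying_matroid by blast
  show "finite_cyclic_sets ` {M. finitary_matroid M \<and> translation_invariant M}
      \<subseteq> {I :: 'n lpoly set. tropical_ideal I}"
    using tropical_ideal_finite_cyclic_sets by blast
qed

section \<open>Paving matroids and \<open>d\<close>-partitions\<close>

definition paving_matroid :: "nat \<Rightarrow> 'a set set \<Rightarrow> bool" where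
  "paving_matroid r M \<longleftrightarrow> finitary_matroid M \<and> has_rank M r \<and>
     (\<forall>C\<in>circuits M. finite C \<and> (card C = r \<or> card C = r + 1))"

text \<open>The paving matroid of rank \<open>d + 1\<close> whose hyperplanes are the blocks of \<open>P\<close>.\<close>

definition paving_of_partition :: "nat \<Rightarrow> 'a set set \<Rightarrow> 'a set set" where
  "paving_of_partition d P =
     {X. finite X \<and> (card X \<le> d \<or> (card X = d + 1 \<and> \<not> (\<exists>B\<in>P. X \<subseteq> B)))}"

lemma d_partition_ex1_block:
  "d_partition d E P \<Longrightarrow> S \<subseteq> E \<Longrightarrow> finite S \<Longrightarrow> card S = d \<Longrightarrow> \<exists>!B. B \<in> P \<and> S \<subseteq> B"
  unfolding d_partition_def by simp

lemma d_partition_block_exists: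
  "d_partition d E P \<Longrightarrow> S \<subseteq> E \<Longrightarrow> finite S \<Longrightarrow> card S = d \<Longrightarrow> \<exists>B\<in>P. S \<subseteq> B"
  by (drule (3) d_partition_ex1_block) (blast dest: ex1_implies_ex)

lemma d_partition_block_unique:
  assumes "d_partition d E P" "S \<subseteq> E" "finite S" "card S = d"
    and "B \<in> P" "S \<subseteq> B" "B' \<in> P" "S \<subseteq> B'"
  shows "B = B'"
  using d_partition_ex1_block[OF assms(1-4)] assms(5-8) by (elim ex1E) blast

lemma d_partition_block_size: "d_partition d E P \<Longrightarrow> B \<in> P \<Longrightarrow> infinite B \<or> d \<le> card B"
  by (simp add: d_partition_def)

lemma d_partition_two_blocks: "d_partition d E P \<Longrightarrow> \<exists>A\<in>P. \<exists>B\<in>P. A \<noteq> B"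
  by (simp add: d_partition_def)

lemma d_partition_block_contains:
  assumes "d_partition d E P" "B \<in> P"
  shows "\<exists>S. S \<subseteq> B \<and> finite S \<and> card S = d"
proof (cases "finite B")
  case True
  then have "card B \<ge> d" using d_partition_block_size[OF assms] by blast
  with obtain_subset_with_card_n show ?thesis by metis
next
  case False
  then show ?thesis using infinite_arbitrarily_large by blast
qed

lemma d_partition_block_proper:
  assumes P: "d_partition d UNIV P" and B: "B \<in> P"
  shows "B \<noteq> UNIV"
proof
  assume "B = UNIV"
  obtain A A' where A: "A \<in> P" "A' \<in> P" "A \<noteq> A'" using d_partition_two_blocks[OF P] by blast
  have "A = B" if A: "A \<in> P" for A
  proof -
    obtain S where "S \<subseteq> A" "finite S" "card S = d" using d_partition_block_contains[OF P A] by blast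
    then show ?thesis using d_partition_block_unique[OF P _ _ _ A _ B] \<open>B = UNIV\<close> by blast
  qed
  with A show False by blast
qed

lemma paving_of_partition_bound: "X \<in> paving_of_partition d P \<Longrightarrow> finite X \<and> card X \<le> d + 1"
  unfolding paving_of_partition_def by auto

lemma insert_in_paving_of_partition:
  assumes P: "d_partition d UNIV P" and B: "B \<in> P" "S \<subseteq> B" and S: "finite S" "card S = d"
    and x: "x \<notin> B"
  shows "insert x S \<in> paving_of_partition d P" and "card (insert x S) = d + 1"
proof -
  have "x \<notin> S" using x B by blast
  then show card: "card (insert x S) = d + 1" using S by simp
  have "\<not> insert x S \<subseteq> B'" if B': "B' \<in> P" for B'
    using d_partition_block_unique[OF P _ S B B'] x by blast
  with card show "insert x S \<in> paving_of_partition d P" unfolding paving_of_partition_def using S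
    by auto
qed

lemma paving_of_partition_subset:
  assumes X: "X \<in> paving_of_partition d P" and YX: "Y \<subseteq> X"
  shows "Y \<in> paving_of_partition d P"
proof -
  have fX: "finite X" using paving_of_partition_bound[OF X] by simp
  have fY: "finite Y" using YX fX by (rule finite_subset)
  have cY: "card Y \<le> card X" using card_mono[OF fX YX] .
  show ?thesis
  proof (cases "card Y \<le> d")
    case True
    then show ?thesis unfolding paving_of_partition_def using fY by simp
  next
    case False
    then have "card Y = card X" using X cY unfolding paving_of_partition_def by auto
    then have "Y = X" using card_subset_eq[OF fX YX] by simp
    with X show ?thesis by simp
  qed
qed

lemma paving_of_partition_augment:
  assumes P: "d_partition d UNIV P"
    and X: "X \<in> paving_of_partition d P" and Y: "Y \<in> paving_of_partition d P"
    and XY: "finite X" "card X < card Y"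
  shows "\<exists>y\<in>Y - X. insert y X \<in> paving_of_partition d P"
proof (cases "card X < d")
  case True
  have "\<not> Y \<subseteq> X" using card_mono[OF XY(1)] XY(2) leD by blast
  then obtain y where y: "y \<in> Y - X" by blast
  then have "insert y X \<in> paving_of_partition d P"
    using True XY unfolding paving_of_partition_def by simp
  with y show ?thesis by blast
next
  case False
  with XY paving_of_partition_bound[OF Y] have cX: "card X = d" by simp
  then have "card Y = d + 1" "\<not> (\<exists>B\<in>P. Y \<subseteq> B)"
    using Y XY unfolding paving_of_partition_def by auto
  moreover obtain B where B: "B \<in> P" "X \<subseteq> B" using d_partition_block_exists[OF P _ XY(1) cX]
    by blast
  ultimately obtain y where y: "y \<in> Y" "y \<notin> B" by blast
  then have "insert y X \<in> paving_of_partition d P"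
    using insert_in_paving_of_partition[OF P B XY(1) cX] by blast
  with y B show ?thesis by blast
qed

lemma paving_of_partition_finitary:
  assumes H: "\<And>F. F \<subseteq> X \<Longrightarrow> finite F \<Longrightarrow> F \<in> paving_of_partition d P"
  shows "X \<in> paving_of_partition d P"
proof (cases "finite X")
  case False
  then obtain F where F: "F \<subseteq> X" "finite F" "card F = d + 2"
    using infinite_arbitrarily_large by blast
  with H have "F \<in> paving_of_partition d P" by blast
  with F show ?thesis using paving_of_partition_bound[of F d P] by simp
next
  case True
  then show ?thesis using H[of X] by simp
qed

lemma finitary_matroid_paving_of_partition:
  assumes P: "d_partition d UNIV P"
  shows "finitary_matroid (paving_of_partition d P)"
  unfolding finitary_matroid_def
proof (intro conjI ballI allI impI)
  have "{} \<in> paving_of_partition d P" unfolding paving_of_partition_def by simp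
  then show "paving_of_partition d P \<noteq> {}" by blast
next
  fix X Y assume "X \<in> paving_of_partition d P" "Y \<subseteq> X"
  then show "Y \<in> paving_of_partition d P" by (rule paving_of_partition_subset)
next
  fix X Y assume X: "X \<in> paving_of_partition d P" and Y: "Y \<in> paving_of_partition d P"
    and XY: "finite X \<and> finite Y \<and> card X < card Y"
  show "\<exists>y\<in>Y - X. insert y X \<in> paving_of_partition d P"
    using paving_of_partition_augment[OF P X Y] XY by blast
next
  fix X assume H: "\<forall>F. F \<subseteq> X \<and> finite F \<longrightarrow> F \<in> paving_of_partition d P"
  show "X \<in> paving_of_partition d P" by (rule paving_of_partition_finitary) (use H in blast)
qed

lemma circuit_card_paving_of_partition:
  assumes C: "C \<in> circuits (paving_of_partition d P)"
  shows "finite C \<and> (card C = d + 1 \<or> card C = d + 1 + 1)"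
proof -
  have nC: "C \<notin> paving_of_partition d P"
    and sC: "\<And>x. x \<in> C \<Longrightarrow> C - {x} \<in> paving_of_partition d P"
    using C unfolding circuits_def by auto
  obtain x where x: "x \<in> C" using nC unfolding paving_of_partition_def by fastforce
  have "finite (C - {x})" "card (C - {x}) \<le> d + 1" using paving_of_partition_bound[OF sC[OF x]]
    by auto
  then have "finite C" "card C \<le> d + 2" using x by (auto simp: card_Diff_singleton)
  moreover have "\<not> card C \<le> d" using nC \<open>finite C\<close> unfolding paving_of_partition_def by auto
  ultimately show ?thesis by auto
qed

lemma paving_matroid_paving_of_partition:
  assumes P: "d_partition d UNIV P"
  shows "paving_matroid (d + 1) (paving_of_partition d P)"
proof -
  let ?M = "paving_of_partition d P"
  obtain A B where AB: "A \<in> P" "B \<in> P" "A \<noteq> B" using d_partition_two_blocks[OF P] by blast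
  obtain S where S: "S \<subseteq> B" "finite S" "card S = d" using d_partition_block_contains[OF P AB(2)]
    by blast
  obtain x where x: "x \<notin> B" using d_partition_block_proper[OF P AB(2)] by blast
  note insert_in_paving_of_partition[OF P AB(2) S x]
  then have "has_rank ?M (d + 1)"
    unfolding has_rank_def using paving_of_partition_bound[of _ d P] by blast
  then show ?thesis
    unfolding paving_matroid_def
    using finitary_matroid_paving_of_partition[OF P] circuit_card_paving_of_partition by blast
qed

lemma
  shows card_le_mrank_paving_of_partition:
      "Y \<subseteq> X \<Longrightarrow> Y \<in> paving_of_partition d P \<Longrightarrow> card Y \<le> mrank (paving_of_partition d P) X"
    and mrank_paving_of_partition_attained:
      "\<exists>Y. Y \<subseteq> X \<and> Y \<in> paving_of_partition d P \<and> card Y = mrank (paving_of_partition d P) X"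
proof -
  have E: "{} \<in> paving_of_partition d P" unfolding paving_of_partition_def by simp
  have bound: "\<And>Y. Y \<subseteq> X \<Longrightarrow> Y \<in> paving_of_partition d P \<Longrightarrow> card Y \<le> d + 1"
    using paving_of_partition_bound by blast
  show "card Y \<le> mrank (paving_of_partition d P) X" if "Y \<subseteq> X" "Y \<in> paving_of_partition d P"
    using card_le_mrank[OF E bound that] .
  show "\<exists>Y. Y \<subseteq> X \<and> Y \<in> paving_of_partition d P \<and> card Y = mrank (paving_of_partition d P) X"
    by (rule mrank_attained[OF E bound])
qed

lemma mrank_paving_of_partition_UNIV:
  assumes P: "d_partition d UNIV P"
  shows "mrank (paving_of_partition d P) UNIV = d + 1"
proof -
  have "has_rank (paving_of_partition d P) (d + 1)"
    using paving_matroid_paving_of_partition[OF P] unfolding paving_matroid_def by blast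
  then obtain X where "X \<in> paving_of_partition d P" "card X = d + 1" unfolding has_rank_def by blast
  then have "d + 1 \<le> mrank (paving_of_partition d P) UNIV"
    using card_le_mrank_paving_of_partition[of X UNIV] by simp
  moreover obtain Y where
    "Y \<in> paving_of_partition d P" "card Y = mrank (paving_of_partition d P) UNIV"
    using mrank_paving_of_partition_attained[where X = UNIV and d = d and P = P] by blast
  then have "mrank (paving_of_partition d P) UNIV \<le> d + 1" using paving_of_partition_bound[of Y d P]
    by simp
  ultimately show ?thesis by simp
qed

lemma mrank_paving_of_partition_block:
  assumes P: "d_partition d UNIV P" and B: "B \<in> P"
  shows "mrank (paving_of_partition d P) B = d"
proof -
  obtain S where S: "S \<subseteq> B" "finite S" "card S = d" using d_partition_block_contains[OF P B]
    by blast
  then have "S \<in> paving_of_partition d P" unfolding paving_of_partition_def by simp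
  then have "d \<le> mrank (paving_of_partition d P) B"
    using card_le_mrank_paving_of_partition[OF S(1)] S(3) by simp
  moreover obtain Y where Y: "Y \<subseteq> B" "Y \<in> paving_of_partition d P"
    "card Y = mrank (paving_of_partition d P) B"
    using mrank_paving_of_partition_attained[where X = B and d = d and P = P] by blast
  then have "card Y \<le> d" using B unfolding paving_of_partition_def by auto
  ultimately show ?thesis using Y by simp
qed

lemma mrank_paving_of_partition_beyond_block:
  assumes P: "d_partition d UNIV P" and B: "B \<in> P" "S \<subseteq> B" "finite S" "card S = d"
    and x: "x \<in> H" "x \<notin> B" and SH: "S \<subseteq> H"
  shows "d + 1 \<le> mrank (paving_of_partition d P) H"
  using insert_in_paving_of_partition[OF P B x(2)]
    card_le_mrank_paving_of_partition[of "insert x S" H] x SH by simp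

lemma hyperplanes_paving_of_partition:
  assumes P: "d_partition d UNIV P"
  shows "hyperplanes (paving_of_partition d P) = P"
proof (intro equalityI subsetI)
  let ?M = "paving_of_partition d P"
  note rank = mrank_paving_of_partition_UNIV[OF P]
  fix H assume "H \<in> hyperplanes ?M"
  then have H: "mrank ?M H = d" "\<And>H'. H \<subset> H' \<Longrightarrow> mrank ?M H' \<noteq> d"
    unfolding hyperplanes_def rank by auto
  obtain S where S: "S \<subseteq> H" "S \<in> ?M" "card S = d"
    using mrank_paving_of_partition_attained[where X = H and d = d and P = P] H(1) by auto
  have fS: "finite S" using paving_of_partition_bound[OF S(2)] by simp
  obtain B where B: "B \<in> P" "S \<subseteq> B" using d_partition_block_exists[OF P _ fS S(3)] by blast
  have "H \<subseteq> B"
  proof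
    fix x assume "x \<in> H"
    show "x \<in> B"
      using mrank_paving_of_partition_beyond_block[OF P B fS S(3) \<open>x \<in> H\<close> _ S(1)] H(1)
      by (cases "x \<in> B") simp_all
  qed
  moreover have "\<not> H \<subset> B" using H(2) mrank_paving_of_partition_block[OF P B(1)] by blast
  ultimately show "H \<in> P" using B by blast
next
  let ?M = "paving_of_partition d P"
  fix B assume B: "B \<in> P"
  have "mrank ?M H' \<noteq> d" if BH': "B \<subset> H'" for H'
  proof -
    obtain S where S: "S \<subseteq> B" "finite S" "card S = d" using d_partition_block_contains[OF P B]
      by blast
    obtain x where x: "x \<in> H'" "x \<notin> B" using BH' by blast
    have "S \<subseteq> H'" using S(1) BH' by blast
    then show ?thesis using mrank_paving_of_partition_beyond_block[OF P B S x] by simp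
  qed
  then show "B \<in> hyperplanes ?M"
    unfolding hyperplanes_def mrank_paving_of_partition_UNIV[OF P]
    using mrank_paving_of_partition_block[OF P B] by simp
qed

lemma translation_invariant_paving_of_partition:
  assumes P: "translation_invariant P"
  shows "translation_invariant (paving_of_partition d P)"
proof (rule translation_invariantI)
  fix u X assume X: "X \<in> paving_of_partition d P"
  have no_block: "\<not> (\<exists>B\<in>P. translate u X \<subseteq> B)" if "\<not> (\<exists>B\<in>P. X \<subseteq> B)"
  proof
    assume "\<exists>B\<in>P. translate u X \<subseteq> B"
    then obtain B where "B \<in> P" "X \<subseteq> translate (- u) B" by (auto simp: translate_subset_iff_neg)
    moreover have "translate (- u) B \<in> P" using \<open>B \<in> P\<close> translation_invariant_iff[OF P] by blast
    ultimately show False using that by blast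
  qed
  have "finite X" "card X \<le> d \<or> (card X = d + 1 \<and> \<not> (\<exists>B\<in>P. X \<subseteq> B))"
    using X unfolding paving_of_partition_def by auto
  with no_block show "translate u X \<in> paving_of_partition d P"
    unfolding paving_of_partition_def mem_Collect_eq finite_translate card_translate by blast
qed

lemma mrank_translate:
  assumes M: "translation_invariant M"
  shows "mrank M (translate u X) = mrank M X"
proof -
  have image: "card Y \<in> {card Y | Y. Y \<subseteq> translate v Z \<and> Y \<in> M}"
    if "Y \<subseteq> Z" "Y \<in> M" for Y Z v
  proof -
    have "translate v Y \<subseteq> translate v Z" using that(1) by (simp add: translate_subset_iff)
    moreover have "translate v Y \<in> M" using that(2) translation_invariant_iff[OF M] by blast
    ultimately show ?thesis by (metis (mono_tags, lifting) card_translate mem_Collect_eq)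
  qed
  have "{card Y | Y. Y \<subseteq> translate u X \<and> Y \<in> M} = {card Y | Y. Y \<subseteq> X \<and> Y \<in> M}"
  proof (intro equalityI subsetI)
    fix k assume "k \<in> {card Y | Y. Y \<subseteq> translate u X \<and> Y \<in> M}"
    then obtain Y where "k = card Y" "Y \<subseteq> translate u X" "Y \<in> M" by blast
    then show "k \<in> {card Y | Y. Y \<subseteq> X \<and> Y \<in> M}"
      using image[of Y "translate u X" "- u"] by (simp add: translate_neg_translate)
  next
    fix k assume "k \<in> {card Y | Y. Y \<subseteq> X \<and> Y \<in> M}"
    then show "k \<in> {card Y | Y. Y \<subseteq> translate u X \<and> Y \<in> M}" using image by blast
  qed
  then show ?thesis unfolding mrank_def by simp
qed

lemma translation_invariant_hyperplanes:
  assumes M: "translation_invariant M"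
  shows "translation_invariant (hyperplanes M)"
proof (rule translation_invariantI)
  fix u H assume "H \<in> hyperplanes M"
  then have H: "mrank M H = mrank M UNIV - 1" "\<And>H'. H \<subset> H' \<Longrightarrow> mrank M H' \<noteq> mrank M UNIV - 1"
    unfolding hyperplanes_def by auto
  have "mrank M H' \<noteq> mrank M UNIV - 1" if H': "translate u H \<subset> H'" for H'
  proof -
    have "H \<subset> translate (- u) H'"
      using H' translate_subset_iff_neg[of u H H'] translate_translate_neg[of u H'] by auto
    then show ?thesis using H(2) mrank_translate[OF M, of "- u" H'] by metis
  qed
  then show "translate u H \<in> hyperplanes M"
    unfolding hyperplanes_def using H(1) mrank_translate[OF M] by simp
qed

text \<open>For independent \<open>S\<close>, \<open>mclosure M S\<close> is the closure (span) of \<open>S\<close>.\<close>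

definition mclosure :: "'a set set \<Rightarrow> 'a set \<Rightarrow> 'a set" where
  "mclosure M S = S \<union> {x. insert x S \<notin> M}"

definition closure_blocks :: "nat \<Rightarrow> 'a set set \<Rightarrow> 'a set set" where
  "closure_blocks d M = {mclosure M S | S. finite S \<and> card S = d}"

context
  fixes M :: "'a set set" and d :: nat
  assumes paving: "paving_matroid (d + 1) M"
begin

lemma paving_finitary: "finitary_matroid M"
  using paving unfolding paving_matroid_def by blast

lemma paving_small_independent:
  assumes "finite X" "card X \<le> d"
  shows "X \<in> M"
proof (rule ccontr)
  assume "X \<notin> M"
  then obtain C where C: "C \<in> circuits M" "C \<subseteq> X" using dependent_contains_circuit assms(1) by blast
  have "card C \<le> card X" using card_mono[OF assms(1) C(2)] .
  moreover have "card C \<ge> d + 1" using C(1) paving unfolding paving_matroid_def by auto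
  ultimately show False using assms(2) by simp
qed

lemma paving_independent_bound: "X \<in> M \<Longrightarrow> finite X \<and> card X \<le> d + 1"
  using paving unfolding paving_matroid_def has_rank_def by blast

lemma card_independent_subset_mclosure:
  assumes T: "finite T" "card T = d" and J: "J \<subseteq> mclosure M T" "J \<in> M"
  shows "card J \<le> d"
proof (rule ccontr)
  assume "\<not> card J \<le> d"
  then have "card T < card J" using T by simp
  moreover have "T \<in> M" using paving_small_independent T by simp
  ultimately obtain y where y: "y \<in> J - T" "insert y T \<in> M"
    using finitary_matroid_augment[OF paving_finitary _ J(2) T(1)] paving_independent_bound[OF J(2)]
      by blast
  then show False using J(1) unfolding mclosure_def by blast
qed

lemma mclosure_subset_mclosure:
  assumes T: "finite T" "card T = d" and S: "finite S" "card S = d" and ST: "S \<subseteq> mclosure M T"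
  shows "mclosure M S \<subseteq> mclosure M T"
proof
  fix x assume x: "x \<in> mclosure M S"
  show "x \<in> mclosure M T"
  proof (rule ccontr)
    assume "x \<notin> mclosure M T"
    then have xT: "x \<notin> T" "insert x T \<in> M" unfolding mclosure_def by blast+
    have "x \<notin> S" using ST \<open>x \<notin> mclosure M T\<close> by blast
    with x have dep: "insert x S \<notin> M" unfolding mclosure_def by blast
    have "S \<in> M" using paving_small_independent S by simp
    moreover have "card S < card (insert x T)" using T S xT by simp
    ultimately obtain y where y: "y \<in> insert x T - S" "insert y S \<in> M"
      using finitary_matroid_augment[OF paving_finitary _ xT(2) S(1)] T by blast
    then have "y \<noteq> x" using dep by blast
    with y have "y \<in> T" by blast
    then have "insert y S \<subseteq> mclosure M T" using ST unfolding mclosure_def by blast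
    then have "card (insert y S) \<le> d" using card_independent_subset_mclosure[OF T _ y(2)] by blast
    then show False using y S by simp
  qed
qed

lemma subset_mclosure_sym:
  assumes T: "finite T" "card T = d" and S: "finite S" "card S = d" and ST: "S \<subseteq> mclosure M T"
  shows "T \<subseteq> mclosure M S"
proof
  fix t assume t: "t \<in> T"
  show "t \<in> mclosure M S"
  proof (rule ccontr)
    assume "t \<notin> mclosure M S"
    then have "t \<notin> S" "insert t S \<in> M" unfolding mclosure_def by blast+
    moreover have "insert t S \<subseteq> mclosure M T" using t ST unfolding mclosure_def by blast
    ultimately have "card (insert t S) \<le> d" using card_independent_subset_mclosure[OF T] by blast
    with \<open>t \<notin> S\<close> S show False by simp
  qed
qed

lemma mclosure_eq_mclosure:
  assumes "finite T" "card T = d" "finite S" "card S = d" "S \<subseteq> mclosure M T"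
  shows "mclosure M S = mclosure M T"
  using mclosure_subset_mclosure[OF assms]
    mclosure_subset_mclosure[OF assms(3,4,1,2) subset_mclosure_sym[OF assms]]
  by (rule antisym)

lemma paving_basis_exists: "\<exists>X. X \<in> M \<and> finite X \<and> card X = d + 1"
  using paving unfolding paving_matroid_def has_rank_def by blast

lemma closure_blocks_distinct:
  assumes "d \<ge> 1"
  shows "\<exists>A\<in>closure_blocks d M. \<exists>B\<in>closure_blocks d M. A \<noteq> B"
proof -
  obtain X where X: "X \<in> M" "finite X" "card X = d + 1" using paving_basis_exists by blast
  then have "X \<noteq> {}" by auto
  then obtain b1 where b1: "b1 \<in> X" by blast
  then have "card (X - {b1}) = d" using X by simp
  with assms have "X - {b1} \<noteq> {}" by (metis card.empty not_one_le_zero)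
  then obtain b2 where b: "b1 \<in> X" "b2 \<in> X" "b1 \<noteq> b2" using b1 by blast
  define S where "S = X - {b1}"
  define T where "T = X - {b2}"
  have S: "finite S" "card S = d" and T: "finite T" "card T = d"
    unfolding S_def T_def using X b by auto
  have "b1 \<in> mclosure M T" unfolding T_def mclosure_def using b by blast
  moreover have "insert b1 S = X" unfolding S_def using b by blast
  then have "b1 \<notin> mclosure M S" using X unfolding S_def mclosure_def by auto
  moreover have "mclosure M S \<in> closure_blocks d M" "mclosure M T \<in> closure_blocks d M"
    unfolding closure_blocks_def using S T by blast+
  ultimately show ?thesis by blast
qed

lemma d_partition_closure_blocks:
  assumes "d \<ge> 1"
  shows "d_partition d UNIV (closure_blocks d M)"
  unfolding d_partition_def
proof (intro conjI ballI allI impI)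
  obtain X where X: "X \<in> M" "finite X" "card X = d + 1" using paving_basis_exists by blast
  show "infinite (UNIV :: 'a set) \<or> d + 1 \<le> card (UNIV :: 'a set)"
  proof (cases "finite (UNIV :: 'a set)")
    case True
    with X show ?thesis using card_mono[OF True, of X] by simp
  qed simp
  show "\<exists>A\<in>closure_blocks d M. \<exists>B\<in>closure_blocks d M. A \<noteq> B"
    using closure_blocks_distinct[OF assms] .
next
  fix B assume "B \<in> closure_blocks d M"
  then obtain S where S: "finite S" "card S = d" "B = mclosure M S" unfolding closure_blocks_def
    by blast
  then have "S \<subseteq> B" unfolding mclosure_def by blast
  show "infinite B \<or> d \<le> card B"
  proof (cases "finite B")
    case True
    then show ?thesis using card_mono[OF True \<open>S \<subseteq> B\<close>] S by simp
  qed simp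
next
  fix S :: "'a set" assume S: "S \<subseteq> UNIV \<and> finite S \<and> card S = d"
  show "\<exists>!B. B \<in> closure_blocks d M \<and> S \<subseteq> B"
  proof (rule ex1I[of _ "mclosure M S"])
    show "mclosure M S \<in> closure_blocks d M \<and> S \<subseteq> mclosure M S"
      unfolding closure_blocks_def mclosure_def using S by blast
  next
    fix B assume "B \<in> closure_blocks d M \<and> S \<subseteq> B"
    then obtain T where "finite T" "card T = d" "B = mclosure M T" "S \<subseteq> mclosure M T"
      unfolding closure_blocks_def by blast
    then show "B = mclosure M S" using mclosure_eq_mclosure S by simp
  qed
qed simp

lemma paving_of_partition_closure_blocks: "paving_of_partition d (closure_blocks d M) = M"
proof (intro equalityI subsetI)
  fix X assume X: "X \<in> paving_of_partition d (closure_blocks d M)"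
  then have fX: "finite X" unfolding paving_of_partition_def by blast
  show "X \<in> M"
  proof (cases "card X \<le> d")
    case True
    then show ?thesis using paving_small_independent fX by blast
  next
    case False
    then have c: "card X = d + 1" and no_block: "\<not> (\<exists>B\<in>closure_blocks d M. X \<subseteq> B)"
      using X unfolding paving_of_partition_def by auto
    have "X \<noteq> {}" using c by auto
    then obtain x where x: "x \<in> X" by blast
    have S: "finite (X - {x})" "card (X - {x}) = d" using fX c x by auto
    show "X \<in> M"
    proof (rule ccontr)
      assume "X \<notin> M"
      moreover have "insert x (X - {x}) = X" using x by blast
      ultimately have "X \<subseteq> mclosure M (X - {x})" unfolding mclosure_def by auto
      moreover have "mclosure M (X - {x}) \<in> closure_blocks d M" unfolding closure_blocks_def using S
        by blast
      ultimately show False using no_block by blast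
    qed
  qed
next
  fix X assume X: "X \<in> M"
  then have fX: "finite X" and cX: "card X \<le> d + 1" using paving_independent_bound by auto
  have "\<not> X \<subseteq> B" if "card X = d + 1" "B \<in> closure_blocks d M" for B
  proof
    assume XB: "X \<subseteq> B"
    obtain T where T: "finite T" "card T = d" "B = mclosure M T"
      using \<open>B \<in> closure_blocks d M\<close> unfolding closure_blocks_def by blast
    show False using card_independent_subset_mclosure[OF T(1,2) _ X] XB T(3) that(1) by simp
  qed
  with fX cX show "X \<in> paving_of_partition d (closure_blocks d M)"
    unfolding paving_of_partition_def by auto
qed

end

lemma paving_matroid_hyperplanes:
  assumes M: "paving_matroid (d + 1) M" and d: "d \<ge> 1"
  shows "d_partition d UNIV (hyperplanes M)" and "paving_of_partition d (hyperplanes M) = M"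
proof -
  have P: "d_partition d UNIV (closure_blocks d M)" using d_partition_closure_blocks[OF M d] .
  have "hyperplanes M = closure_blocks d M"
    using hyperplanes_paving_of_partition[OF P] paving_of_partition_closure_blocks[OF M] by simp
  then show "d_partition d UNIV (hyperplanes M)" "paving_of_partition d (hyperplanes M) = M"
    using P paving_of_partition_closure_blocks[OF M] by simp_all
qed

theorem paving_matroids_bij_partitions:
  assumes d: "d \<ge> 1"
  shows "bij_betw hyperplanes
    {M :: (int ^ 'n::finite) set set. paving_matroid (d + 1) M \<and> translation_invariant M}
    {P. d_partition d UNIV P \<and> translation_invariant P}"
proof (rule bij_betw_byWitness[where f' = "paving_of_partition d"])
  show "\<forall>M\<in>{M. paving_matroid (d + 1) M \<and> translation_invariant M}.
      paving_of_partition d (hyperplanes M) = M"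
    using paving_matroid_hyperplanes(2) d by blast
  show "\<forall>P\<in>{P. d_partition d UNIV P \<and> translation_invariant P}.
      hyperplanes (paving_of_partition d P) = P"
    using hyperplanes_paving_of_partition by blast
  show "hyperplanes ` {M. paving_matroid (d + 1) M \<and> translation_invariant M}
      \<subseteq> {P. d_partition d UNIV P \<and> translation_invariant P}"
    using paving_matroid_hyperplanes(1) d translation_invariant_hyperplanes by blast
  show "paving_of_partition d ` {P. d_partition d UNIV P \<and> translation_invariant P}
      \<subseteq> {M :: (int ^ 'n) set set. paving_matroid (d + 1) M \<and> translation_invariant M}"
    using paving_matroid_paving_of_partition translation_invariant_paving_of_partition by blast
qed

lemma paving_tropical_ideal_iff:
  "paving_tropical_ideal_of_degree I r \<longleftrightarrow> tropical_ideal I \<and> paving_matroid r (underlying_matroid I)"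
  unfolding paving_tropical_ideal_of_degree_def zero_dim_of_degree_def paving_matroid_def
  using finitary_matroid_underlying_matroid by blast

theorem paving_ideals_bij_paving_matroids:
  "bij_betw (underlying_matroid :: 'n::finite lpoly set \<Rightarrow> _)
     {I. paving_tropical_ideal_of_degree I r} {M. paving_matroid r M \<and> translation_invariant M}"
proof (rule bij_betw_subset[OF tropical_ideals_bij_matroids])
  show "{I :: 'n lpoly set. paving_tropical_ideal_of_degree I r} \<subseteq> {I. tropical_ideal I}"
    using paving_tropical_ideal_iff by blast
  show "underlying_matroid ` {I :: 'n lpoly set. paving_tropical_ideal_of_degree I r}
      = {M. paving_matroid r M \<and> translation_invariant M}"
  proof (intro equalityI subsetI)
    fix M assume "M \<in> underlying_matroid ` {I :: 'n lpoly set. paving_tropical_ideal_of_degree I r}"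
    then show "M \<in> {M. paving_matroid r M \<and> translation_invariant M}"
      using paving_tropical_ideal_iff translation_invariant_underlying_matroid by blast
  next
    fix M :: "(int ^ 'n) set set" assume M: "M \<in> {M. paving_matroid r M \<and> translation_invariant M}"
    then have "finitary_matroid M" unfolding paving_matroid_def by blast
    with M have "underlying_matroid (finite_cyclic_sets M) = M"
      "tropical_ideal (finite_cyclic_sets M)"
      using underlying_matroid_finite_cyclic_sets tropical_ideal_finite_cyclic_sets by blast+
    with M show "M \<in> underlying_matroid ` {I. paving_tropical_ideal_of_degree I r}"
      using paving_tropical_ideal_iff by (metis (mono_tags, lifting) image_eqI mem_Collect_eq)
  qed
qed

theorem mainTheorem3:
  shows "bij_betw (underlying_matroid :: 'n::finite lpoly set \<Rightarrow> _)
            {I. tropical_ideal I}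
            {M. finitary_matroid M \<and> translation_invariant M}
       \<and> (\<forall>d::nat. d \<ge> 1 \<longrightarrow>
            bij_betw (\<lambda>I :: 'n lpoly set. hyperplanes (underlying_matroid I))
              {I. paving_tropical_ideal_of_degree I (d + 1)}
              {P. d_partition d UNIV P \<and> translation_invariant P})"
proof (intro conjI allI impI)
  show "bij_betw underlying_matroid {I :: 'n lpoly set. tropical_ideal I}
      {M. finitary_matroid M \<and> translation_invariant M}"
    by (rule tropical_ideals_bij_matroids)
next
  fix d :: nat assume "d \<ge> 1"
  then have "bij_betw (hyperplanes \<circ> underlying_matroid)
      {I :: 'n lpoly set. paving_tropical_ideal_of_degree I (d + 1)}
      {P. d_partition d UNIV P \<and> translation_invariant P}"
    using bij_betw_trans[OF paving_ideals_bij_paving_matroids paving_matroids_bij_partitions]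
      by blast
  then show "bij_betw (\<lambda>I :: 'n lpoly set. hyperplanes (underlying_matroid I))
      {I. paving_tropical_ideal_of_degree I (d + 1)}
      {P. d_partition d UNIV P \<and> translation_invariant P}"
    by (simp add: comp_def)
qed

end
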